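(* Assume the process is uniformly allowable with constant $\alpha>0$, and set $p_*=\alpha/2$. Let $\theta\in\mathcal I$, $k\in[N]$, $0<\tilde\delta<1$ and $\mathbf s\in[0,1]^N$. If there exists $i\in[N]$ with $\mathbf M_\theta(k,i)>0$ and $s_i<1-\tilde\delta$, then $f_\theta^{(k)}(\mathbf s)<1-p_*\tilde\delta$.
   Context: $N\ge2$, $\mathcal I$ a countable set, $[N]=\{0,\dots,N-1\}$. For each $\theta\in\mathcal I$ and $k\in[N]$, $f_\theta^{(k)}(\mathbf s)=\sum_{\mathbf z\in\mathbb N_0^N}f_\theta^{(k)}[\mathbf z]\mathbf s^{\mathbf z}$ ($\mathbf s^{\mathbf z}=\prod_j s_j^{z_j}$) is the pgf of a probability distribution on $\mathbb N_0^N$, and $\mathbf M_\theta(k,i)=\partial f_\theta^{(k)}/\partial s_i(\mathbf 1)$ (finite). Uniformly allowable with constant $\alpha$ means $\inf\{\sum_{\mathbf w\in\mathbb N_0^N:\,w_i\ne0}f_\theta^{(k)}[\mathbf w]:\theta\in\mathcal I,\ k,i\in[N],\ \mathbf M_\theta(k,i)>0\}>\alpha$. *)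

theory Defs
  imports "HOL-Analysis.Analysis"
begin

text \<open>Vectors in N_0^N are functions nat => nat vanishing outside [N] = {0..<N}.\<close>
definition vecs :: "nat \<Rightarrow> (nat \<Rightarrow> nat) set" where
  "vecs N = {z. \<forall>j. N \<le> j \<longrightarrow> z j = 0}"

definition prob_dist :: "nat \<Rightarrow> ((nat \<Rightarrow> nat) \<Rightarrow> real) \<Rightarrow> bool" where
  "prob_dist N p \<longleftrightarrow> (\<forall>z. 0 \<le> p z) \<and> (\<forall>z. z \<notin> vecs N \<longrightarrow> p z = 0)
     \<and> (p has_sum 1) (vecs N)"

definition pgf :: "nat \<Rightarrow> ((nat \<Rightarrow> nat) \<Rightarrow> real) \<Rightarrow> (nat \<Rightarrow> real) \<Rightarrow> real" where
  "pgf N p s = (\<Sum>\<^sub>\<infinity>z\<in>vecs N. p z * (\<Prod>j<N. s j ^ z j))"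

text \<open>Finiteness of all first partial derivatives at 1 (finite means).\<close>
definition finite_means :: "nat \<Rightarrow> ((nat \<Rightarrow> nat) \<Rightarrow> real) \<Rightarrow> bool" where
  "finite_means N p \<longleftrightarrow> (\<forall>i<N. (\<lambda>z. p z * real (z i)) summable_on vecs N)"

text \<open>M(k,i) = partial derivative of f^(k) w.r.t. s_i at 1 = sum_z f[z] z_i.\<close>
definition mean_mat :: "nat \<Rightarrow> ((nat \<Rightarrow> nat) \<Rightarrow> real) \<Rightarrow> nat \<Rightarrow> real" where
  "mean_mat N p i = (\<Sum>\<^sub>\<infinity>z\<in>vecs N. p z * real (z i))"

text \<open>Uniformly allowable with constant alpha; the infimum is taken in the extended
  reals so that the infimum of the empty set is +infinity.\<close>
definition uniformly_allowable ::
  "nat \<Rightarrow> 'i set \<Rightarrow> ('i \<Rightarrow> nat \<Rightarrow> (nat \<Rightarrow> nat) \<Rightarrow> real) \<Rightarrow> real \<Rightarrow> bool" where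
  "uniformly_allowable N I f \<alpha> \<longleftrightarrow>
     Inf {ereal (\<Sum>\<^sub>\<infinity>w\<in>{w\<in>vecs N. w i \<noteq> 0}. f \<theta> k w) | \<theta> k i.
            \<theta> \<in> I \<and> k < N \<and> i < N \<and> mean_mat N (f \<theta> k) i > 0} > ereal \<alpha>"

end

theory Submission
  imports Defs
begin

text \<open>Every monomial \<open>s\<^sup>z\<close> lies in [0,1], and it is at most \<open>s\<^sub>i\<close> as soon as
  \<open>z\<^sub>i \<noteq> 0\<close>. Hence \<open>f(s) \<le> 1 - (1 - s\<^sub>i) P(z\<^sub>i \<noteq> 0)\<close>, and uniform allowability
  bounds \<open>P(z\<^sub>i \<noteq> 0)\<close> below by \<open>\<alpha>\<close> whenever \<open>M(k,i) > 0\<close>.\<close>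

lemma monomial_nonneg_le_one:
  fixes s :: "nat \<Rightarrow> real"
  assumes "\<forall>j<N. 0 \<le> s j \<and> s j \<le> 1"
  shows "0 \<le> (\<Prod>j<N. s j ^ z j)" and "(\<Prod>j<N. s j ^ z j) \<le> 1"
  using assms by (auto intro!: prod_nonneg prod_le_1 power_le_one)

lemma monomial_le_coordinate:
  fixes s :: "nat \<Rightarrow> real"
  assumes "\<forall>j<N. 0 \<le> s j \<and> s j \<le> 1" and "i < N" and "z i \<noteq> 0"
  shows "(\<Prod>j<N. s j ^ z j) \<le> s i"
proof -
  have si: "0 \<le> s i" "s i \<le> 1" using assms(1,2) by auto
  have "(\<Prod>j<N. s j ^ z j) = s i ^ z i * (\<Prod>j\<in>{..<N} - {i}. s j ^ z j)"
    using assms(2) by (simp add: prod.remove)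
  also have "\<dots> \<le> s i ^ z i"
  proof -
    have "(\<Prod>j\<in>{..<N} - {i}. s j ^ z j) \<le> 1"
      using assms(1) by (auto intro!: prod_le_1 power_le_one)
    then show ?thesis using si by (simp add: mult_left_le)
  qed
  also have "\<dots> \<le> s i ^ 1"
    using si assms(3) by (intro power_decreasing) auto
  finally show ?thesis by simp
qed

lemma infsum_le_minus_deficit:
  fixes p g :: "'a \<Rightarrow> real"
  assumes p_sum: "(p has_sum P) V" and "A \<subseteq> V"
    and g_bounds: "\<And>z. 0 \<le> g z \<and> g z \<le> p z"
    and g_le_A: "\<And>z. z \<in> A \<Longrightarrow> g z \<le> c * p z"
  shows "infsum g V \<le> P - (1 - c) * infsum p A"
proof -
  have V_split: "A \<union> (V - A) = V" using \<open>A \<subseteq> V\<close> by blast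
  have pA: "p summable_on A" and pB: "p summable_on V - A"
    using p_sum \<open>A \<subseteq> V\<close> by (auto intro: summable_on_subset_banach dest: has_sum_imp_summable)
  have gA: "g summable_on A" and gB: "g summable_on V - A"
    using pA pB g_bounds by (auto intro: summable_on_comparison_test)
  have "infsum p A + infsum p (V - A) = P"
    using infsum_Un_disjoint[OF pA pB Diff_disjoint] V_split p_sum by (simp add: infsumI)
  moreover have "infsum g A \<le> c * infsum p A"
  proof -
    have "infsum g A \<le> infsum (\<lambda>z. c * p z) A"
      using gA pA g_le_A by (intro infsum_mono) (auto intro: summable_on_cmult_right)
    then show ?thesis by (simp add: infsum_cmult_right')
  qed
  moreover have "infsum g (V - A) \<le> infsum p (V - A)"
    using gB pB g_bounds by (intro infsum_mono) auto
  moreover have "infsum g V = infsum g A + infsum g (V - A)"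
    using infsum_Un_disjoint[OF gA gB Diff_disjoint] V_split by simp
  moreover have "(1 - c) * infsum p A = infsum p A - c * infsum p A"
    by (simp add: left_diff_distrib)
  ultimately show ?thesis by linarith
qed

lemma pgf_le_one_minus_mass:
  assumes "prob_dist N p" and "\<forall>j<N. 0 \<le> s j \<and> s j \<le> 1" and "i < N"
  shows "pgf N p s \<le> 1 - (1 - s i) * (\<Sum>\<^sub>\<infinity>w\<in>{w\<in>vecs N. w i \<noteq> 0}. p w)"
  unfolding pgf_def
proof (rule infsum_le_minus_deficit)
  show "(p has_sum 1) (vecs N)" using assms(1) unfolding prob_dist_def by blast
  have p_nonneg: "0 \<le> p z" for z using assms(1) unfolding prob_dist_def by blast
  show "0 \<le> p z * (\<Prod>j<N. s j ^ z j) \<and> p z * (\<Prod>j<N. s j ^ z j) \<le> p z" for z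
    using p_nonneg[of z] monomial_nonneg_le_one[OF assms(2)] by (simp add: mult_left_le)
  show "p z * (\<Prod>j<N. s j ^ z j) \<le> s i * p z" if "z \<in> {w\<in>vecs N. w i \<noteq> 0}" for z
    using mult_left_mono[OF monomial_le_coordinate[OF assms(2,3)] p_nonneg] that
    by (simp add: mult.commute)
qed auto

lemma uniformly_allowable_mass_gt:
  assumes "uniformly_allowable N I f \<alpha>"
    and "\<theta> \<in> I" and "k < N" and "i < N" and "mean_mat N (f \<theta> k) i > 0"
  shows "\<alpha> < (\<Sum>\<^sub>\<infinity>w\<in>{w\<in>vecs N. w i \<noteq> 0}. f \<theta> k w)"
proof -
  let ?S = "{ereal (\<Sum>\<^sub>\<infinity>w\<in>{w\<in>vecs N. w i \<noteq> 0}. f \<theta> k w) | \<theta> k i.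
            \<theta> \<in> I \<and> k < N \<and> i < N \<and> mean_mat N (f \<theta> k) i > 0}"
  have "ereal \<alpha> < Inf ?S" using assms(1) unfolding uniformly_allowable_def by simp
  also have "Inf ?S \<le> ereal (\<Sum>\<^sub>\<infinity>w\<in>{w\<in>vecs N. w i \<noteq> 0}. f \<theta> k w)"
    using assms(2-5) by (intro Inf_lower) blast
  finally show ?thesis by simp
qed

theorem lemma5p7:
  fixes N :: nat and I :: "'i set" and f :: "'i \<Rightarrow> nat \<Rightarrow> (nat \<Rightarrow> nat) \<Rightarrow> real"
    and \<alpha> \<delta> :: real and \<theta> :: 'i and k :: nat and s :: "nat \<Rightarrow> real"
  assumes "N \<ge> 2" and "countable I"
    and dist: "\<And>\<theta> k. \<theta> \<in> I \<Longrightarrow> k < N \<Longrightarrow> prob_dist N (f \<theta> k)"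
    and means: "\<And>\<theta> k. \<theta> \<in> I \<Longrightarrow> k < N \<Longrightarrow> finite_means N (f \<theta> k)"
    and "\<alpha> > 0" and "uniformly_allowable N I f \<alpha>"
    and "\<theta> \<in> I" and "k < N" and "0 < \<delta>" and "\<delta> < 1"
    and "\<forall>j<N. 0 \<le> s j \<and> s j \<le> 1"
    and "\<exists>i<N. mean_mat N (f \<theta> k) i > 0 \<and> s i < 1 - \<delta>"
  shows "pgf N (f \<theta> k) s < 1 - (\<alpha> / 2) * \<delta>"
proof -
  obtain i where i: "i < N" "mean_mat N (f \<theta> k) i > 0" "s i < 1 - \<delta>"
    using assms(12) by blast
  let ?mass = "\<Sum>\<^sub>\<infinity>w\<in>{w\<in>vecs N. w i \<noteq> 0}. f \<theta> k w"
  have "pgf N (f \<theta> k) s \<le> 1 - (1 - s i) * ?mass"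
    using dist[OF assms(7,8)] assms(11) i(1) by (rule pgf_le_one_minus_mass)
  moreover have "\<alpha> < ?mass"
    using assms(6-8) i(1,2) by (rule uniformly_allowable_mass_gt)
  then have "\<delta> * \<alpha> < (1 - s i) * ?mass"
    using i(3) \<open>0 < \<delta>\<close> \<open>\<alpha> > 0\<close> by (intro mult_strict_mono) auto
  moreover have "(\<alpha> / 2) * \<delta> < \<delta> * \<alpha>"
    using \<open>\<alpha> > 0\<close> \<open>0 < \<delta>\<close> by simp
  ultimately show ?thesis by linarith
qed

end
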